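(* Let $M$ be a finite monoid and $A$ a finite subset of $M$ with $A\cap U(M)\neq\emptyset$, where $U(M)$ is the set of invertible elements of $M$. Let $V=\mathbb{C}\langle\overline{A}\rangle\subseteq\mathbb{C}[M]$. Then for every $0<\lambda\leq1$, the unique atom $\mathcal{H}_\lambda$ of $V$ containing $1$ is a subalgebra of $\mathbb{C}[M]$ which contains $\mathcal{H}_l(A):=\{x\in\mathbb{C}[M]\mid x\overline{A}\subseteq\mathbb{C}\langle\overline{A}\rangle\}$ and satisfies $|BA|\geq|A|+\lambda|B|-\lambda\dim_{\mathbb{C}}(\mathcal{H}_\lambda)$ and $\dim_{\mathbb{C}}(\mathcal{H}_\lambda)\geq|H_A|$ for every finite subset $B$ of $M$ with $B\cap U(M)\neq\emptyset$. In particular $|BA|\geq|A|+|B|-\dim_{\mathbb{C}}(\mathcal{H}_1)$ and $\dim_{\mathbb{C}}(\mathcal{H}_1)\geq|H_A|$.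
   Context: $\mathbb{C}[M]$ is the monoid algebra with basis $\{e_g\mid g\in M\}$ and $e_ge_{g'}=e_{gg'}$; for $S\subseteq M$, $\overline{S}=\{e_s\mid s\in S\}$, and $\mathbb{C}\langle\cdot\rangle$ is linear span. $BA=\{ba\mid b\in B,a\in A\}\subseteq M$. $H_A=\{h\in M\mid hA=A\}$. Connectivity relative to $V$ and $\lambda$: for a finite-dimensional subspace $W\subseteq\mathbb{C}[M]$, $c(W)=\dim_{\mathbb{C}}\mathbb{C}\langle WV\rangle-\lambda\dim_{\mathbb{C}}W$ where $WV=\{wv\}$; $\kappa$ is the infimum of $c(W)$ over subspaces $W$ containing an invertible element of $\mathbb{C}[M]$; a fragment is such a $W$ with $c(W)=\kappa$; an atom is a fragment of minimal dimension (there is a unique atom containing $1$). *)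

theory Defs
  imports Complex_Main "HOL-Library.Function_Algebras"
begin

text \<open>The monoid algebra C[M] of a finite monoid M, realised as the functions
  M \<Rightarrow> complex (coefficient vectors w.r.t. the basis e_g), with pointwise addition
  and complex scalar multiplication, and convolution product.\<close>

definition cscale :: "complex \<Rightarrow> ('a \<Rightarrow> complex) \<Rightarrow> 'a \<Rightarrow> complex" where
  "cscale c f = (\<lambda>x. c * f x)"

interpretation cf: vector_space "cscale :: complex \<Rightarrow> ('a \<Rightarrow> complex) \<Rightarrow> 'a \<Rightarrow> complex"
  by unfold_locales (auto simp: cscale_def algebra_simps)

definition basis_el :: "'m \<Rightarrow> 'm \<Rightarrow> complex" where
  "basis_el g = (\<lambda>h. if h = g then 1 else 0)"

text \<open>multiplication in C[M]: e_g e_g' = e_{gg'}, extended bilinearly\<close>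
definition malg_mult :: "('m::{monoid_mult,finite} \<Rightarrow> complex) \<Rightarrow> ('m \<Rightarrow> complex) \<Rightarrow> 'm \<Rightarrow> complex" where
  "malg_mult x y = (\<lambda>g. \<Sum>p\<in>{p. fst p * snd p = g}. x (fst p) * y (snd p))"

definition malg_one :: "'m::{monoid_mult,finite} \<Rightarrow> complex" where
  "malg_one = basis_el 1"

definition malg_invertible :: "('m::{monoid_mult,finite} \<Rightarrow> complex) \<Rightarrow> bool" where
  "malg_invertible x \<longleftrightarrow> (\<exists>y. malg_mult x y = malg_one \<and> malg_mult y x = malg_one)"

definition units_M :: "'m::monoid_mult set" where
  "units_M = {u. \<exists>v. u * v = 1 \<and> v * u = 1}"

definition setprod :: "'m::monoid_mult set \<Rightarrow> 'm set \<Rightarrow> 'm set" where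
  "setprod B A = {b * a | b a. b \<in> B \<and> a \<in> A}"

definition stab_left :: "'m::monoid_mult set \<Rightarrow> 'm set" where
  "stab_left A = {h. (\<lambda>a. h * a) ` A = A}"

definition subsp_prod :: "('m::{monoid_mult,finite} \<Rightarrow> complex) set \<Rightarrow> ('m \<Rightarrow> complex) set \<Rightarrow> ('m \<Rightarrow> complex) set" where
  "subsp_prod W V = {malg_mult w v | w v. w \<in> W \<and> v \<in> V}"

definition conn :: "('m::{monoid_mult,finite} \<Rightarrow> complex) set \<Rightarrow> real \<Rightarrow> ('m \<Rightarrow> complex) set \<Rightarrow> real" where
  "conn V lam W = real (cf.dim (cf.span (subsp_prod W V))) - lam * real (cf.dim W)"

text \<open>admissible W: subspace containing an invertible element
  (finite-dimensionality is automatic since C[M] is finite-dimensional)\<close>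
definition admissible :: "('m::{monoid_mult,finite} \<Rightarrow> complex) set \<Rightarrow> bool" where
  "admissible W \<longleftrightarrow> cf.subspace W \<and> (\<exists>x\<in>W. malg_invertible x)"

definition kappa :: "('m::{monoid_mult,finite} \<Rightarrow> complex) set \<Rightarrow> real \<Rightarrow> real" where
  "kappa V lam = Inf {conn V lam W | W. admissible W}"

definition fragment :: "('m::{monoid_mult,finite} \<Rightarrow> complex) set \<Rightarrow> real \<Rightarrow> ('m \<Rightarrow> complex) set \<Rightarrow> bool" where
  "fragment V lam W \<longleftrightarrow> admissible W \<and> conn V lam W = kappa V lam"

definition atom :: "('m::{monoid_mult,finite} \<Rightarrow> complex) set \<Rightarrow> real \<Rightarrow> ('m \<Rightarrow> complex) set \<Rightarrow> bool" where
  "atom V lam W \<longleftrightarrow> fragment V lam W \<and>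
     (\<forall>W'. fragment V lam W' \<longrightarrow> cf.dim W \<le> cf.dim W')"

definition subalgebra :: "('m::{monoid_mult,finite} \<Rightarrow> complex) set \<Rightarrow> bool" where
  "subalgebra H \<longleftrightarrow> cf.subspace H \<and> malg_one \<in> H \<and>
     (\<forall>x\<in>H. \<forall>y\<in>H. malg_mult x y \<in> H)"

definition Hl :: "'m::{monoid_mult,finite} set \<Rightarrow> ('m \<Rightarrow> complex) set" where
  "Hl A = {x. \<forall>a\<in>A. malg_mult x (basis_el a) \<in> cf.span (basis_el ` A)}"

end

theory Submission
  imports Defs
begin

text \<open>Connectivity is submodular (Grassmann's formula for \<open>W\<close> and for \<open>WV\<close>) and invariant under
  left translation by invertible elements. Hence two fragments meeting in an invertible element
  intersect in a fragment, which makes the atom \<open>H\<close> through \<open>1\<close> unique and stable under left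
  multiplication by its invertible elements \<open>h\<close> (the atom \<open>hH\<close> meets \<open>H\<close> in \<open>h\<close>). Every
  \<open>x \<in> H\<close> is a combination of \<open>1\<close> and an invertible \<open>1 + t x \<in> H\<close>, so \<open>H\<close> is a subalgebra.
  The span of \<open>H \<cdot> H\<^sub>l(A)\<close> contains \<open>H\<close> but has the same product with \<open>V\<close>, so by
  minimality it is \<open>H\<close>, giving \<open>H\<^sub>l(A) \<subseteq> H\<close>; and \<open>e\<^sub>h \<in> H\<^sub>l(A)\<close> for \<open>h \<in> H\<^sub>A\<close>.
  Finally \<open>\<kappa> = c(H) \<ge> |A| - \<lambda> dim H\<close>, while \<open>c(\<complex>\<langle>B\<rangle>) = |BA| - \<lambda>|B|\<close>.\<close>

section \<open>The monoid algebra\<close>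

lemma sum_fun_apply: "(\<Sum>x\<in>S. f x) g = (\<Sum>x\<in>S. f x g)"
  by (induction S rule: infinite_finite_induct) auto

lemma basis_el_inj: "inj basis_el"
  by (rule injI) (metis basis_el_def zero_neq_one)

lemma basis_el_independent: "cf.independent (basis_el ` S)"
  unfolding cf.independent_explicit_module
proof (intro allI impI)
  fix t u v
  assume t: "finite t" "t \<subseteq> basis_el ` S" and s: "(\<Sum>v\<in>t. cscale (u v) v) = 0" and v: "v \<in> t"
  obtain g where g: "v = basis_el g" using t v by auto
  have "0 = (\<Sum>w\<in>t. cscale (u w) w) g" using s by simp
  also have "\<dots> = (\<Sum>w\<in>t. if w = v then u v else 0)"
    unfolding sum_fun_apply
  proof (rule sum.cong)
    fix w assume "w \<in> t"
    then obtain h where h: "w = basis_el h" using t by auto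
    show "cscale (u w) w g = (if w = v then u v else 0)"
      unfolding h g inj_eq[OF basis_el_inj] by (auto simp: cscale_def basis_el_def)
  qed simp
  also have "\<dots> = u v" using t v by simp
  finally show "u v = 0" by simp
qed

lemma fun_eq_sum_basis_el: "f = (\<Sum>g\<in>UNIV. cscale (f g) (basis_el (g::'a::finite)))"
proof
  fix h
  have "(\<Sum>g\<in>UNIV. cscale (f g) (basis_el g)) h = (\<Sum>g\<in>UNIV. if g = h then f g else 0)"
    unfolding sum_fun_apply by (rule sum.cong) (auto simp: cscale_def basis_el_def)
  then show "f h = (\<Sum>g\<in>UNIV. cscale (f g) (basis_el g)) h" by simp
qed

lemma span_range_basis_el: "cf.span (range (basis_el :: 'a::finite \<Rightarrow> _)) = UNIV"
proof -
  have "f \<in> cf.span (range basis_el)" for f :: "'a \<Rightarrow> complex"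
    by (subst fun_eq_sum_basis_el) (intro cf.span_sum cf.span_scale cf.span_base rangeI)
  then show ?thesis by auto
qed

interpretation fd: finite_dimensional_vector_space
  "cscale :: complex \<Rightarrow> ('a::finite \<Rightarrow> complex) \<Rightarrow> 'a \<Rightarrow> complex" "range basis_el"
  by unfold_locales (auto simp: basis_el_independent span_range_basis_el)

interpretation fdp: finite_dimensional_vector_space_pair_1
  "cscale :: complex \<Rightarrow> ('a::finite \<Rightarrow> complex) \<Rightarrow> 'a \<Rightarrow> complex" "range basis_el"
  "cscale :: complex \<Rightarrow> ('a::finite \<Rightarrow> complex) \<Rightarrow> 'a \<Rightarrow> complex"
  by unfold_locales

lemma card_basis_el_image: "card (basis_el ` S) = card S"
  by (rule card_image, rule inj_on_subset[OF basis_el_inj]) simp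

lemma dim_span_basis_el: "cf.dim (cf.span (basis_el ` S)) = card S"
  using cf.dim_span_eq_card_independent[OF basis_el_independent[of S]] card_basis_el_image[of S]
  by simp

lemma dim_le_card_UNIV: "cf.dim (S :: ('m::finite \<Rightarrow> complex) set) \<le> card (UNIV :: 'm set)"
proof -
  have "cf.dim S \<le> cf.dim (UNIV :: ('m \<Rightarrow> complex) set)" by (rule fd.dim_subset) simp
  also have "\<dots> = card (UNIV :: 'm set)" using fd.dim_UNIV card_basis_el_image by simp
  finally show ?thesis .
qed

lemma linear_eq_on_basis_el:
  fixes f g :: "('a::finite \<Rightarrow> complex) \<Rightarrow> 'a \<Rightarrow> complex"
  assumes "Vector_Spaces.linear cscale cscale f" "Vector_Spaces.linear cscale cscale g"
    and "\<And>a. f (basis_el a) = g (basis_el a)"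
  shows "f = g"
  using fdp.linear_eq_on[OF assms(1,2)] assms(3) span_range_basis_el by blast

lemma malg_mult_add_left: "malg_mult (x + y) z = malg_mult x z + malg_mult y z"
  by (rule ext) (simp add: malg_mult_def sum.distrib distrib_right)

lemma malg_mult_add_right: "malg_mult z (x + y) = malg_mult z x + malg_mult z y"
  by (rule ext) (simp add: malg_mult_def sum.distrib distrib_left)

lemma malg_mult_diff_right: "malg_mult z (x - y) = malg_mult z x - malg_mult z y"
  by (rule ext) (simp add: malg_mult_def sum_subtractf right_diff_distrib)

lemma malg_mult_scale_left: "malg_mult (cscale c x) z = cscale c (malg_mult x z)"
  by (rule ext) (simp add: malg_mult_def cscale_def sum_distrib_left mult.assoc)

lemma malg_mult_scale_right: "malg_mult z (cscale c x) = cscale c (malg_mult z x)"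
  by (rule ext) (simp add: malg_mult_def cscale_def sum_distrib_left mult.left_commute)

lemma linear_malg_mult_left: "Vector_Spaces.linear cscale cscale (\<lambda>x. malg_mult x z)"
  using cf.vector_space_axioms
  by (simp add: Vector_Spaces.linear_iff malg_mult_add_left malg_mult_scale_left)

lemma linear_malg_mult_right: "Vector_Spaces.linear cscale cscale (malg_mult z)"
  using cf.vector_space_axioms
  by (simp add: Vector_Spaces.linear_iff malg_mult_add_right malg_mult_scale_right)

lemma malg_mult_basis_el: "malg_mult (basis_el a) (basis_el b) = basis_el (a * b)"
proof
  fix g
  have "malg_mult (basis_el a) (basis_el b) g
      = (\<Sum>p\<in>{p. fst p * snd p = g}. if p = (a, b) then 1 else 0)"
    unfolding malg_mult_def by (rule sum.cong) (auto simp: basis_el_def)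
  then show "malg_mult (basis_el a) (basis_el b) g = basis_el (a * b) g"
    by (simp add: basis_el_def eq_commute)
qed

lemma malg_mult_one_left:
  fixes x :: "'m::{monoid_mult,finite} \<Rightarrow> complex"
  shows "malg_mult malg_one x = x"
proof -
  have "malg_mult malg_one = (id :: ('m \<Rightarrow> complex) \<Rightarrow> _)"
    by (rule linear_eq_on_basis_el) (simp_all add: linear_malg_mult_right cf.linear_id
        malg_one_def malg_mult_basis_el)
  then show ?thesis by simp
qed

lemma malg_mult_one_right:
  fixes x :: "'m::{monoid_mult,finite} \<Rightarrow> complex"
  shows "malg_mult x malg_one = x"
proof -
  have "(\<lambda>x. malg_mult x malg_one) = (id :: ('m \<Rightarrow> complex) \<Rightarrow> _)"
    by (rule linear_eq_on_basis_el) (simp_all add: linear_malg_mult_left cf.linear_id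
        malg_one_def malg_mult_basis_el)
  then show ?thesis by (simp add: fun_eq_iff)
qed

text \<open>Both sides are linear in each argument, so it suffices to compare them on basis
  elements, one argument at a time.\<close>
lemma malg_mult_assoc: "malg_mult (malg_mult x y) z = malg_mult x (malg_mult y z)"
proof -
  have comp: "Vector_Spaces.linear cscale cscale (\<lambda>x. f (g x))"
    if "Vector_Spaces.linear cscale cscale f" "Vector_Spaces.linear cscale cscale g"
    for f g :: "('a \<Rightarrow> complex) \<Rightarrow> 'a \<Rightarrow> complex"
    using Vector_Spaces.linear_compose[OF that(2,1)] by (simp add: o_def)
  have basis: "malg_mult (malg_mult (basis_el a) (basis_el b)) = (\<lambda>z. malg_mult (basis_el a) (malg_mult (basis_el b) z))"
    for a b :: 'a
    by (rule linear_eq_on_basis_el)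
      (simp_all add: malg_mult_basis_el mult.assoc linear_malg_mult_right
        comp[OF linear_malg_mult_right linear_malg_mult_right])
  have left_basis: "(\<lambda>y. malg_mult (malg_mult (basis_el a) y) z) = (\<lambda>y. malg_mult (basis_el a) (malg_mult y z))"
    for a :: 'a
    by (rule linear_eq_on_basis_el[OF comp[OF linear_malg_mult_left linear_malg_mult_right]
          comp[OF linear_malg_mult_right linear_malg_mult_left]]) (simp add: basis)
  have "(\<lambda>x. malg_mult (malg_mult x y) z) = (\<lambda>x. malg_mult x (malg_mult y z))"
    by (rule linear_eq_on_basis_el[OF comp[OF linear_malg_mult_left linear_malg_mult_left]
          linear_malg_mult_left]) (use left_basis in \<open>simp add: fun_eq_iff\<close>)
  then show ?thesis by (simp add: fun_eq_iff)
qed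

section \<open>Invertible elements\<close>

lemma malg_invertible_one: "malg_invertible malg_one"
  unfolding malg_invertible_def by (metis malg_mult_one_left)

lemma malg_invertible_mult:
  assumes "malg_invertible x" "malg_invertible y"
  shows "malg_invertible (malg_mult x y)"
proof -
  obtain x' y' where "malg_mult x x' = malg_one" "malg_mult x' x = malg_one"
    "malg_mult y y' = malg_one" "malg_mult y' y = malg_one"
    using assms unfolding malg_invertible_def by blast
  then show ?thesis
    unfolding malg_invertible_def
    by (intro exI[of _ "malg_mult y' x'"]) (metis malg_mult_assoc malg_mult_one_left)
qed

lemma malg_invertible_basis_el:
  assumes "g \<in> units_M"
  shows "malg_invertible (basis_el g)"
proof -
  obtain h where "g * h = 1" "h * g = 1" using assms unfolding units_M_def by blast
  then show ?thesis
    unfolding malg_invertible_def malg_one_def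
    by (intro exI[of _ "basis_el h"]) (simp add: malg_mult_basis_el)
qed

lemma malg_invertible_if_inj:
  assumes "inj (malg_mult z)"
  shows "malg_invertible z"
proof -
  obtain y where y: "malg_mult z y = malg_one"
    using fd.linear_inj_imp_surj[OF linear_malg_mult_right assms] by (metis surjD)
  then have "malg_mult z (malg_mult y z) = malg_mult z malg_one"
    by (simp add: malg_mult_assoc[symmetric] malg_mult_one_left malg_mult_one_right)
  then have "malg_mult y z = malg_one" using assms by (simp add: inj_eq)
  then show ?thesis using y unfolding malg_invertible_def by blast
qed

lemma inj_malg_mult_if_invertible: "malg_invertible y \<Longrightarrow> inj (malg_mult y)"
  unfolding malg_invertible_def by (rule injI) (metis malg_mult_assoc malg_mult_one_left)

lemma dim_image_malg_mult: "malg_invertible y \<Longrightarrow> cf.dim (malg_mult y ` W) = cf.dim W"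
  by (rule fdp.dim_image_eq[OF linear_malg_mult_right])
    (auto intro: inj_on_subset[OF inj_malg_mult_if_invertible])

definition l1_norm :: "('a::finite \<Rightarrow> complex) \<Rightarrow> real" where
  "l1_norm x = (\<Sum>g\<in>UNIV. cmod (x g))"

lemma l1_norm_nonneg: "0 \<le> l1_norm x"
  unfolding l1_norm_def by (rule sum_nonneg) simp

lemma l1_norm_eq_0_iff: "l1_norm x = 0 \<longleftrightarrow> x = 0"
  unfolding l1_norm_def by (simp add: sum_nonneg_eq_0_iff fun_eq_iff)

lemma l1_norm_scale: "l1_norm (cscale c x) = cmod c * l1_norm x"
  by (simp add: l1_norm_def cscale_def norm_mult sum_distrib_left)

lemma l1_norm_malg_mult: "l1_norm (malg_mult x y) \<le> l1_norm x * l1_norm y"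
proof -
  let ?f = "\<lambda>p. cmod (x (fst p)) * cmod (y (snd p))"
  have "l1_norm (malg_mult x y) \<le> (\<Sum>g\<in>UNIV. \<Sum>p\<in>{p. fst p * snd p = g}. ?f p)"
    unfolding l1_norm_def malg_mult_def
    by (intro sum_mono order_trans[OF norm_sum]) (simp add: norm_mult)
  also have "\<dots> = sum ?f UNIV"
    using sum.group[of UNIV UNIV "\<lambda>p. fst p * snd p" ?f] by simp
  also have "\<dots> = l1_norm x * l1_norm y"
    by (simp add: l1_norm_def sum_product sum.cartesian_product case_prod_beta flip: UNIV_Times_UNIV)
  finally show ?thesis .
qed

text \<open>For \<open>|t| \<parallel>x\<parallel>\<^sub>1 \<le> 1/2\<close>, a kernel element \<open>v = -t x v\<close> of \<open>1 + t x\<close> satisfies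
  \<open>\<parallel>v\<parallel>\<^sub>1 \<le> \<parallel>v\<parallel>\<^sub>1 / 2\<close>; injectivity suffices in finite dimension.\<close>
lemma malg_invertible_one_plus_scale: "\<exists>t. t \<noteq> 0 \<and> malg_invertible (malg_one + cscale t x)"
proof -
  define r where "r = 1 / (2 * (l1_norm x + 1))"
  define t where "t = complex_of_real r"
  have r: "r > 0" "r * l1_norm x \<le> 1 / 2"
    using l1_norm_nonneg[of x] by (auto simp: r_def field_simps)
  then have t: "t \<noteq> 0" "cmod t * l1_norm x \<le> 1 / 2"
    by (auto simp: t_def)
  define z where "z = malg_one + cscale t x"
  have "v = 0" if "malg_mult z v = 0" for v
  proof -
    have "malg_mult z v = v + cscale t (malg_mult x v)"
      by (simp add: z_def malg_mult_add_left malg_mult_one_left malg_mult_scale_left)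
    then have "v = cscale (- t) (malg_mult x v)"
      using that by (auto simp: cscale_def fun_eq_iff add_eq_0_iff)
    then have "l1_norm v = cmod t * l1_norm (malg_mult x v)"
      by (metis l1_norm_scale norm_minus_cancel)
    also have "\<dots> \<le> cmod t * l1_norm x * l1_norm v"
      using l1_norm_malg_mult[of x v] by (simp add: mult.assoc mult_left_mono)
    also have "\<dots> \<le> 1 / 2 * l1_norm v"
      using t(2) l1_norm_nonneg[of v] by (rule mult_right_mono)
    finally show "v = 0"
      using l1_norm_nonneg[of v] l1_norm_eq_0_iff[of v] by simp
  qed
  then have "inj (malg_mult z)"
    by (intro injI) (metis malg_mult_diff_right right_minus_eq)
  then show ?thesis
    using malg_invertible_if_inj t(1) unfolding z_def by blast
qed

section \<open>Products of subspaces\<close>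

lemma subsp_prod_mono: "P \<subseteq> P' \<Longrightarrow> Q \<subseteq> Q' \<Longrightarrow> subsp_prod P Q \<subseteq> subsp_prod P' Q'"
  by (auto simp: subsp_prod_def)

lemma subsp_prod_Un_left: "subsp_prod (X \<union> Y) V = subsp_prod X V \<union> subsp_prod Y V"
  by (auto simp: subsp_prod_def)

lemma subset_subsp_prod_if_one_left: "malg_one \<in> W \<Longrightarrow> V \<subseteq> subsp_prod W V"
  unfolding subsp_prod_def by (force simp: malg_mult_one_left)

lemma subset_subsp_prod_if_one_right: "malg_one \<in> V \<Longrightarrow> W \<subseteq> subsp_prod W V"
  unfolding subsp_prod_def by (force simp: malg_mult_one_right)

lemma subsp_prod_basis_el: "subsp_prod (basis_el ` B) (basis_el ` A) = basis_el ` setprod B A"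
  unfolding subsp_prod_def setprod_def
  by (auto simp: malg_mult_basis_el, blast) (metis image_eqI malg_mult_basis_el)

lemma subsp_prod_assoc: "subsp_prod (subsp_prod X Y) Z = subsp_prod X (subsp_prod Y Z)"
proof
  show "subsp_prod (subsp_prod X Y) Z \<subseteq> subsp_prod X (subsp_prod Y Z)"
    unfolding subsp_prod_def by (auto simp: malg_mult_assoc) blast
  show "subsp_prod X (subsp_prod Y Z) \<subseteq> subsp_prod (subsp_prod X Y) Z"
  proof
    fix u assume "u \<in> subsp_prod X (subsp_prod Y Z)"
    then obtain x y z where "u = malg_mult (malg_mult x y) z" "x \<in> X" "y \<in> Y" "z \<in> Z"
      by (auto simp: subsp_prod_def malg_mult_assoc)
    then show "u \<in> subsp_prod (subsp_prod X Y) Z"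
      unfolding subsp_prod_def by blast
  qed
qed

lemma subsp_prod_Hl_subset: "subsp_prod (Hl A) (cf.span (basis_el ` A)) \<subseteq> cf.span (basis_el ` A)"
proof -
  have "malg_mult x ` cf.span (basis_el ` A) \<subseteq> cf.span (basis_el ` A)" if "x \<in> Hl A" for x
    unfolding fdp.linear_span_image[OF linear_malg_mult_right, symmetric]
    using that by (intro cf.span_minimal) (auto simp: Hl_def)
  then show ?thesis unfolding subsp_prod_def by blast
qed

lemma subsp_prod_span_subset: "subsp_prod (cf.span P) (cf.span Q) \<subseteq> cf.span (subsp_prod P Q)"
proof
  fix u assume "u \<in> subsp_prod (cf.span P) (cf.span Q)"
  then obtain w v where u: "u = malg_mult w v" and w: "w \<in> cf.span P" and v: "v \<in> cf.span Q"
    by (auto simp: subsp_prod_def)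
  have "malg_mult p ` cf.span Q \<subseteq> cf.span (subsp_prod P Q)" if "p \<in> P" for p
    unfolding fdp.linear_span_image[OF linear_malg_mult_right, symmetric]
    using that by (intro cf.span_mono) (auto simp: subsp_prod_def)
  then have "(\<lambda>w. malg_mult w v) ` P \<subseteq> cf.span (subsp_prod P Q)"
    using v by blast
  then have "(\<lambda>w. malg_mult w v) ` cf.span P \<subseteq> cf.span (subsp_prod P Q)"
    unfolding fdp.linear_span_image[OF linear_malg_mult_left, symmetric]
    by (rule cf.span_minimal) simp
  then show "u \<in> cf.span (subsp_prod P Q)" using u w by blast
qed

lemma span_subsp_prod_span: "cf.span (subsp_prod (cf.span P) (cf.span Q)) = cf.span (subsp_prod P Q)"
proof
  show "cf.span (subsp_prod (cf.span P) (cf.span Q)) \<subseteq> cf.span (subsp_prod P Q)"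
    by (rule cf.span_minimal[OF subsp_prod_span_subset]) simp
  show "cf.span (subsp_prod P Q) \<subseteq> cf.span (subsp_prod (cf.span P) (cf.span Q))"
    by (intro cf.span_mono subsp_prod_mono cf.span_superset)
qed

lemma subsp_prod_image_malg_mult: "subsp_prod (malg_mult y ` W) V = malg_mult y ` subsp_prod W V"
  unfolding subsp_prod_def by (auto simp: malg_mult_assoc, blast) (metis image_eqI malg_mult_assoc)

section \<open>Connectivity and fragments\<close>

lemma conn_image_malg_mult:
  "malg_invertible y \<Longrightarrow> conn V lam (malg_mult y ` W) = conn V lam W"
  unfolding conn_def subsp_prod_image_malg_mult fdp.linear_span_image[OF linear_malg_mult_right]
  by (simp add: dim_image_malg_mult)

lemma conn_lower_bound:
  fixes V :: "('m::{monoid_mult,finite} \<Rightarrow> complex) set"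
  assumes "0 \<le> lam"
  shows "- lam * real (card (UNIV :: 'm set)) \<le> conn V lam W"
  using mult_left_mono[OF of_nat_mono[OF dim_le_card_UNIV[of W]] assms]
  unfolding conn_def by simp

lemma kappa_le_conn:
  fixes V :: "('m::{monoid_mult,finite} \<Rightarrow> complex) set"
  assumes "0 \<le> lam" "admissible W"
  shows "kappa V lam \<le> conn V lam W"
  unfolding kappa_def using assms conn_lower_bound
  by (intro cInf_lower bdd_belowI[of _ "- lam * real (card (UNIV :: 'm set))"]) auto

text \<open>The infimum defining \<open>kappa\<close> is a minimum since connectivities take only finitely
  many values.\<close>
lemma ex_fragment:
  fixes V :: "('m::{monoid_mult,finite} \<Rightarrow> complex) set"
  shows "\<exists>W. fragment V lam W"
proof -
  define S where "S = {conn V lam W |W. admissible W}"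
  define N where "N = card (UNIV :: 'm set)"
  have "S \<subseteq> (\<lambda>(a, b). real a - lam * real b) ` ({..N} \<times> {..N})"
    unfolding S_def conn_def N_def using dim_le_card_UNIV by fastforce
  then have "finite S" by (rule finite_subset) simp
  moreover have "S \<noteq> {}"
    unfolding S_def admissible_def using malg_invertible_one cf.subspace_UNIV by blast
  ultimately have "Inf S \<in> S" by (simp add: cInf_eq_Min)
  then show ?thesis by (auto simp: S_def fragment_def kappa_def)
qed

lemma fragment_image_malg_mult:
  assumes "fragment V lam W" "malg_invertible y"
  shows "fragment V lam (malg_mult y ` W)"
  using assms fdp.linear_subspace_image[OF linear_malg_mult_right] malg_invertible_mult[OF assms(2)]
  by (fastforce simp: fragment_def admissible_def conn_image_malg_mult)

lemma dim_span_Un_add_dim_Int: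
  assumes "cf.subspace P" "cf.subspace Q"
  shows "cf.dim (cf.span (P \<union> Q)) + cf.dim (P \<inter> Q) = cf.dim P + cf.dim (Q :: ('a::finite \<Rightarrow> complex) set)"
  using fd.dim_sums_Int[OF assms]
  by (simp add: cf.span_Un cf.span_eq_iff[THEN iffD2, OF assms(1)] cf.span_eq_iff[THEN iffD2, OF assms(2)])

lemma conn_submodular:
  assumes X: "cf.subspace X" and Y: "cf.subspace Y"
  shows "conn V lam (cf.span (X \<union> Y)) + conn V lam (X \<inter> Y) \<le> conn V lam X + conn V lam Y"
proof -
  define P where "P = cf.span (subsp_prod X V)"
  define Q where "Q = cf.span (subsp_prod Y V)"
  have "subsp_prod (cf.span (X \<union> Y)) V \<subseteq> subsp_prod (cf.span (X \<union> Y)) (cf.span V)"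
    by (intro subsp_prod_mono cf.span_superset order_refl)
  also have "\<dots> \<subseteq> cf.span (subsp_prod X V \<union> subsp_prod Y V)"
    using subsp_prod_span_subset[of "X \<union> Y" V] by (simp add: subsp_prod_Un_left)
  also have "\<dots> \<subseteq> cf.span (P \<union> Q)"
    unfolding P_def Q_def by (intro cf.span_mono Un_mono cf.span_superset)
  finally have "cf.dim (cf.span (subsp_prod (cf.span (X \<union> Y)) V)) \<le> cf.dim (cf.span (P \<union> Q))"
    by (intro fd.dim_subset cf.span_minimal) auto
  moreover have "cf.dim (cf.span (subsp_prod (X \<inter> Y) V)) \<le> cf.dim (P \<inter> Q)"
    unfolding P_def Q_def by (intro fd.dim_subset Int_greatest cf.span_mono subsp_prod_mono) auto
  moreover have "cf.dim (cf.span (P \<union> Q)) + cf.dim (P \<inter> Q) = cf.dim P + cf.dim Q"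
    by (rule dim_span_Un_add_dim_Int) (simp_all add: P_def Q_def)
  moreover have "cf.dim (cf.span (X \<union> Y)) + cf.dim (X \<inter> Y) = cf.dim X + cf.dim Y"
    by (rule dim_span_Un_add_dim_Int[OF X Y])
  ultimately show ?thesis
    unfolding conn_def P_def Q_def
    by (simp add: algebra_simps flip: distrib_left of_nat_add)
qed

lemma fragment_Int:
  assumes lam: "0 \<le> lam" and X: "fragment V lam X" and Y: "fragment V lam Y"
    and XY: "admissible (X \<inter> Y)"
  shows "fragment V lam (X \<inter> Y)"
proof -
  have "admissible (cf.span (X \<union> Y))"
    using X cf.span_superset unfolding fragment_def admissible_def by blast
  then have "kappa V lam \<le> conn V lam (cf.span (X \<union> Y))"
    by (rule kappa_le_conn[OF lam])
  moreover have "kappa V lam \<le> conn V lam (X \<inter> Y)"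
    by (rule kappa_le_conn[OF lam XY])
  moreover have "conn V lam (cf.span (X \<union> Y)) + conn V lam (X \<inter> Y) \<le> conn V lam X + conn V lam Y"
    using X Y by (intro conn_submodular) (simp_all add: fragment_def admissible_def)
  ultimately show ?thesis
    using X Y XY by (simp add: fragment_def)
qed

lemma fragment_eq_if_superset:
  assumes lam: "0 < lam" and H: "fragment V lam H" and W: "cf.subspace W" "H \<subseteq> W"
    and WV: "cf.span (subsp_prod W V) \<subseteq> cf.span (subsp_prod H V)"
  shows "W = H"
proof -
  have "admissible W"
    using H W unfolding fragment_def admissible_def by blast
  then have "conn V lam H \<le> conn V lam W"
    using H lam kappa_le_conn[of lam W V] by (simp add: fragment_def)
  moreover have "real (cf.dim (cf.span (subsp_prod W V))) \<le> real (cf.dim (cf.span (subsp_prod H V)))"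
    using fd.dim_subset[OF WV] by simp
  ultimately have "lam * real (cf.dim W) \<le> lam * real (cf.dim H)"
    unfolding conn_def by linarith
  then have "cf.dim W \<le> cf.dim H"
    using lam by simp
  then show ?thesis
    using H W fd.subspace_dim_equal[of H W] by (simp add: fragment_def admissible_def)
qed

section \<open>The atom containing the unit\<close>

lemma atom_subspace: "atom V lam H \<Longrightarrow> cf.subspace H"
  by (simp add: atom_def fragment_def admissible_def)

lemma fragment_subset_atom_eq:
  assumes "atom V lam H" "fragment V lam W" "W \<subseteq> H"
  shows "W = H"
  using assms fd.subspace_dim_equal[OF _ atom_subspace[OF assms(1)]]
  by (simp add: atom_def fragment_def admissible_def)

lemma atom_image_malg_mult:
  assumes "atom V lam H" "malg_invertible y"
  shows "atom V lam (malg_mult y ` H)"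
  using assms fragment_image_malg_mult[OF _ assms(2)] dim_image_malg_mult[OF assms(2)]
  by (simp add: atom_def)

lemma ex_atom_one: "\<exists>H. atom V lam H \<and> malg_one \<in> H"
proof -
  obtain W0 where "fragment V lam W0" using ex_fragment by blast
  then obtain W where "atom V lam W"
    using ex_has_least_nat[of "fragment V lam" W0 cf.dim] unfolding atom_def by blast
  moreover obtain x y where "x \<in> W" "malg_mult y x = malg_one" "malg_invertible y"
    using \<open>atom V lam W\<close> unfolding atom_def fragment_def admissible_def malg_invertible_def by blast
  ultimately show ?thesis
    by (metis atom_image_malg_mult image_eqI)
qed

lemma atom_eq_if_admissible_Int:
  assumes lam: "0 \<le> lam" and H1: "atom V lam H1" and H2: "atom V lam H2"
    and adm: "admissible (H1 \<inter> H2)"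
  shows "H1 = H2"
proof -
  have "fragment V lam (H1 \<inter> H2)"
    using H1 H2 by (intro fragment_Int[OF lam _ _ adm]) (simp_all add: atom_def)
  then have "H1 \<inter> H2 = H1" "H1 \<inter> H2 = H2"
    using fragment_subset_atom_eq H1 H2 by blast+
  then show ?thesis by blast
qed

lemma admissible_atom_Int:
  assumes "atom V lam H1" "atom V' lam' H2" "x \<in> H1" "x \<in> H2" "malg_invertible x"
  shows "admissible (H1 \<inter> H2)"
  using assms cf.subspace_inter[OF atom_subspace atom_subspace] unfolding admissible_def by blast

lemma atom_one_unique:
  assumes "0 \<le> lam" "atom V lam H1" "malg_one \<in> H1" "atom V lam H2" "malg_one \<in> H2"
  shows "H1 = H2"
  by (meson assms admissible_atom_Int atom_eq_if_admissible_Int malg_invertible_one)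

text \<open>The translate \<open>h H\<close> is again an atom, and it meets \<open>H\<close> in \<open>h\<close>.\<close>
lemma atom_one_image_malg_mult:
  assumes lam: "0 \<le> lam" and H: "atom V lam H" "malg_one \<in> H"
    and h: "h \<in> H" "malg_invertible h"
  shows "malg_mult h ` H = H"
proof -
  have T: "atom V lam (malg_mult h ` H)" by (rule atom_image_malg_mult[OF H(1) h(2)])
  moreover have "h \<in> malg_mult h ` H"
    using H(2) by (metis image_eqI malg_mult_one_right)
  ultimately show ?thesis
    using H h by (intro atom_eq_if_admissible_Int[OF lam] admissible_atom_Int)
qed

text \<open>Closure under products reduces to the invertible case, since \<open>1 + t x\<close> is invertible
  for some \<open>t \<noteq> 0\<close>.\<close>
lemma atom_one_subalgebra:
  assumes lam: "0 \<le> lam" and H: "atom V lam H" "malg_one \<in> H"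
  shows "subalgebra H"
proof -
  have sH: "cf.subspace H" by (rule atom_subspace[OF H(1)])
  have "malg_mult x y \<in> H" if x: "x \<in> H" and y: "y \<in> H" for x y
  proof -
    obtain t where t: "t \<noteq> 0" "malg_invertible (malg_one + cscale t x)"
      using malg_invertible_one_plus_scale by blast
    define z where "z = malg_one + cscale t x"
    have "z \<in> H" unfolding z_def using sH H(2) x by (intro cf.subspace_add cf.subspace_scale)
    then have "malg_mult z y \<in> H"
      using atom_one_image_malg_mult[OF lam H _ t(2)[folded z_def]] y by blast
    moreover have "malg_mult z y = y + cscale t (malg_mult x y)"
      by (simp add: z_def malg_mult_add_left malg_mult_one_left malg_mult_scale_left)
    ultimately have "cscale (1 / t) (malg_mult z y - y) \<in> H"
      using sH y by (intro cf.subspace_scale cf.subspace_diff)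
    also have "cscale (1 / t) (malg_mult z y - y) = malg_mult x y"
      using \<open>malg_mult z y = _\<close> t(1) by (auto simp: cscale_def fun_eq_iff)
    finally show ?thesis .
  qed
  then show ?thesis using sH H(2) by (simp add: subalgebra_def)
qed

lemma Hl_subset_atom_one:
  assumes lam: "0 < lam" and H: "atom (cf.span (basis_el ` A)) lam H" "malg_one \<in> H"
  shows "Hl A \<subseteq> H"
proof -
  define V where "V = cf.span (basis_el ` A)"
  define W where "W = cf.span (subsp_prod H (Hl A))"
  have "H \<subseteq> W"
    unfolding W_def using subset_subsp_prod_if_one_right[of "Hl A" H] cf.span_superset
    by (auto simp: Hl_def malg_mult_one_left intro: cf.span_base)
  moreover have "cf.span (subsp_prod W V) \<subseteq> cf.span (subsp_prod H V)"
  proof -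
    have "cf.span (subsp_prod W V) = cf.span (subsp_prod H (subsp_prod (Hl A) V))"
      using span_subsp_prod_span[of "subsp_prod H (Hl A)" V]
      by (simp add: W_def V_def subsp_prod_assoc cf.span_span)
    also have "\<dots> \<subseteq> cf.span (subsp_prod H V)"
      unfolding V_def by (intro cf.span_mono subsp_prod_mono subsp_prod_Hl_subset order_refl)
    finally show ?thesis .
  qed
  ultimately have "W = H"
    using H by (intro fragment_eq_if_superset[OF lam]) (auto simp: atom_def V_def W_def)
  moreover have "Hl A \<subseteq> W"
    unfolding W_def using subset_subsp_prod_if_one_left[OF H(2)] cf.span_superset by blast
  ultimately show ?thesis by simp
qed

lemma card_setprod_ge_atom_one:
  assumes lam: "0 \<le> lam" and H: "atom (cf.span (basis_el ` A)) lam H" "malg_one \<in> H"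
    and B: "B \<inter> units_M \<noteq> {}"
  shows "real (card (setprod B A)) \<ge> real (card A) + lam * real (card B) - lam * real (cf.dim H)"
proof -
  define V where "V = cf.span (basis_el ` A)"
  define W where "W = cf.span (basis_el ` B)"
  have "admissible W"
    using B malg_invertible_basis_el unfolding admissible_def W_def by (blast intro: cf.span_base)
  moreover have "conn V lam W = real (card (setprod B A)) - lam * real (card B)"
    unfolding conn_def W_def V_def span_subsp_prod_span subsp_prod_basis_el
    by (simp add: dim_span_basis_el[unfolded cf.dim_span])
  moreover have "real (card A) - lam * real (cf.dim H) \<le> conn V lam H"
  proof -
    have "V \<subseteq> cf.span (subsp_prod H V)"
      using subset_subsp_prod_if_one_left[OF H(2)] cf.span_superset by blast
    then have "cf.dim V \<le> cf.dim (cf.span (subsp_prod H V))"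
      by (rule fd.dim_subset)
    then show ?thesis unfolding conn_def V_def dim_span_basis_el by simp
  qed
  moreover have "conn V lam H = kappa V lam"
    using H by (simp add: atom_def fragment_def V_def)
  ultimately show ?thesis
    using kappa_le_conn[OF lam, of W V] by linarith
qed

lemma card_stab_left_le_dim_atom_one:
  assumes lam: "0 < lam" and H: "atom (cf.span (basis_el ` A)) lam H" "malg_one \<in> H"
  shows "card (stab_left A) \<le> cf.dim H"
proof -
  have "basis_el ` stab_left A \<subseteq> Hl A"
    unfolding Hl_def stab_left_def
    by (auto simp: malg_mult_basis_el intro!: cf.span_base imageI)
  also have "\<dots> \<subseteq> H" by (rule Hl_subset_atom_one[OF lam H])
  finally have "card (basis_el ` stab_left A) \<le> cf.dim H"
    by (rule fd.independent_card_le_dim[OF _ basis_el_independent])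
  then show ?thesis by (simp add: card_basis_el_image)
qed

theorem theorem7p2:
  fixes A :: "'m::{monoid_mult,finite} set" and lam :: real
  assumes "A \<inter> units_M \<noteq> {}"
    and "0 < lam" and "lam \<le> 1"
  defines "V \<equiv> cf.span (basis_el ` A)"
  shows "(\<exists>!H. atom V lam H \<and> malg_one \<in> H) \<and>
    (\<forall>H. atom V lam H \<and> malg_one \<in> H \<longrightarrow>
       subalgebra H \<and> Hl A \<subseteq> H \<and>
       (\<forall>B::'m set. B \<inter> units_M \<noteq> {} \<longrightarrow>
          real (card (setprod B A)) \<ge> real (card A) + lam * real (card B) - lam * real (cf.dim H)) \<and>
       real (cf.dim H) \<ge> real (card (stab_left A)))"
proof -
  have lam: "0 \<le> lam" using \<open>0 < lam\<close> by simp
  have "\<exists>!H. atom V lam H \<and> malg_one \<in> H"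
    using ex_atom_one atom_one_unique[OF lam] by blast
  moreover have "subalgebra H \<and> Hl A \<subseteq> H \<and>
       (\<forall>B::'m set. B \<inter> units_M \<noteq> {} \<longrightarrow>
          real (card (setprod B A)) \<ge> real (card A) + lam * real (card B) - lam * real (cf.dim H)) \<and>
       real (cf.dim H) \<ge> real (card (stab_left A))"
    if H: "atom V lam H" "malg_one \<in> H" for H
    using atom_one_subalgebra[OF lam H] Hl_subset_atom_one[OF \<open>0 < lam\<close> H[unfolded V_def]]
      card_setprod_ge_atom_one[OF lam H[unfolded V_def]]
      card_stab_left_le_dim_atom_one[OF \<open>0 < lam\<close> H[unfolded V_def]]
    by simp
  ultimately show ?thesis by blast
qed

end
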